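(* Consider the following process on a finite vertex set $V=\{1,\dots,p\}$. One maintains a list of cliques $[C_1,\dots,C_m]$ and a set of outstanding vertices $O=V\setminus\bigcup_i C_i$; the associated graph $G$ on $V$ has an edge between two distinct vertices iff they lie in a common $C_i$. Initially the list is a given list of nonempty subsets (for instance a single nonempty subset), and the vertices of $\bigcup_i C_i$ are listed in an order $u_1,\dots,u_r$ whose reverse $[u_r,\dots,u_1]$ is a perfect elimination order of the graph induced by the initial cliques. While $O\ne\emptyset$, a step chooses a clique $C_a$ in the list, a vertex $v\in O$ and a subset $S\subseteq C_a$, and then: if $S$ is a nonempty proper subset of $C_a$, the clique $S\cup\{v\}$ is added to the list; if $S=C_a$, $C_a$ is replaced by $C_a\cup\{v\}$; if $S=\emptyset$, the clique $\{v\}$ is added; finally $v$ is removed from $O$. Let $u_{r+1},\dots,u_p$ be the vertices in the order in which they are added. Then, for any such sequence of choices, $[u_p,u_{p-1},\dots,u_1]$ is a perfect elimination order of the final graph $G$; i.e. the process adds vertices in reverse perfect elimination order.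
   Context: For a graph $G$ on $n$ vertices and an ordering $[v_1,\dots,v_n]$ of its vertices, let $G_i$ be the subgraph induced by $\{v_i,\dots,v_n\}$. The ordering is a perfect elimination order if for every $i$ the set of neighbours of $v_i$ lying in $G_{i+1}$ is complete (pairwise adjacent) in $G_{i+1}$, i.e. $v_i$ is simplicial in $G_i$. *)

theory Defs
  imports Main
begin

definition clique_adj :: "'a set list \<Rightarrow> 'a \<Rightarrow> 'a \<Rightarrow> bool" where
  "clique_adj Cs x y \<longleftrightarrow> x \<noteq> y \<and> (\<exists>C\<in>set Cs. x \<in> C \<and> y \<in> C)"

definition perfect_elim_order :: "('a \<Rightarrow> 'a \<Rightarrow> bool) \<Rightarrow> 'a set \<Rightarrow> 'a list \<Rightarrow> bool" where
  "perfect_elim_order E V vs \<longleftrightarrow> distinct vs \<and> set vs = V \<and>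
     (\<forall>i < length vs. \<forall>x \<in> set (drop (Suc i) vs). \<forall>y \<in> set (drop (Suc i) vs).
        E (vs ! i) x \<and> E (vs ! i) y \<and> x \<noteq> y \<longrightarrow> E x y)"

text \<open>V is the ground vertex set;
the outstanding vertices are V minus the union of the cliques.\<close>
inductive clique_step :: "'a set \<Rightarrow> 'a set list \<times> 'a list \<Rightarrow> 'a set list \<times> 'a list \<Rightarrow> bool"
  for V where
  proper: "\<lbrakk> v \<in> V - \<Union>(set Cs); a < length Cs; S \<subseteq> Cs ! a; S \<noteq> {}; S \<noteq> Cs ! a \<rbrakk>
     \<Longrightarrow> clique_step V (Cs, us) (Cs @ [S \<union> {v}], us @ [v])"
| whole: "\<lbrakk> v \<in> V - \<Union>(set Cs); a < length Cs \<rbrakk>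
     \<Longrightarrow> clique_step V (Cs, us) (Cs[a := Cs ! a \<union> {v}], us @ [v])"
| empty: "\<lbrakk> v \<in> V - \<Union>(set Cs); a < length Cs \<rbrakk>
     \<Longrightarrow> clique_step V (Cs, us) (Cs @ [{v}], us @ [v])"

end

theory Submission
  imports Defs
begin

text \<open>Each step adds the new vertex v together with a clique S \<union> {v}, where S lies
inside an existing clique (S = {} included), and otherwise only enlarges or keeps
cliques. Hence the graph is unchanged away from v, and the neighbourhood of v is
contained in S, which is already complete. So v is simplicial in the new graph, and
putting it in front of a perfect elimination order of the old graph gives one of the
new graph; induction along the run proves the theorem.\<close>

lemma perfect_elim_order_Cons:
  assumes peo: "perfect_elim_order E V vs"
    and "v \<notin> V"
    and agree: "\<And>x y. x \<noteq> v \<Longrightarrow> y \<noteq> v \<Longrightarrow> E' x y = E x y"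
    and simplicial: "\<And>x y. E' v x \<Longrightarrow> E' v y \<Longrightarrow> x \<noteq> y \<Longrightarrow> E x y"
  shows "perfect_elim_order E' (insert v V) (v # vs)"
  unfolding perfect_elim_order_def
proof (intro conjI allI impI ballI)
  have set_vs: "set vs = V" and later_adj:
    "\<And>i x y. i < length vs \<Longrightarrow> x \<in> set (drop (Suc i) vs) \<Longrightarrow> y \<in> set (drop (Suc i) vs) \<Longrightarrow>
       E (vs ! i) x \<Longrightarrow> E (vs ! i) y \<Longrightarrow> x \<noteq> y \<Longrightarrow> E x y"
    using peo unfolding perfect_elim_order_def by blast+
  show "distinct (v # vs)" "set (v # vs) = insert v V"
    using peo \<open>v \<notin> V\<close> by (auto simp: perfect_elim_order_def)
  fix i x y
  assume i: "i < length (v # vs)"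
    and x: "x \<in> set (drop (Suc i) (v # vs))" and y: "y \<in> set (drop (Suc i) (v # vs))"
    and adj: "E' ((v # vs) ! i) x \<and> E' ((v # vs) ! i) y \<and> x \<noteq> y"
  have "x \<in> V" "y \<in> V"
    using x y set_vs by (auto dest: in_set_dropD)
  then have "x \<noteq> v" "y \<noteq> v"
    using \<open>v \<notin> V\<close> by auto
  show "E' x y"
  proof (cases i)
    case 0
    then show ?thesis
      using simplicial adj agree \<open>x \<noteq> v\<close> \<open>y \<noteq> v\<close> by simp
  next
    case (Suc j)
    then have "j < length vs" "vs ! j \<noteq> v"
      using i set_vs \<open>v \<notin> V\<close> nth_mem by auto
    then have "E x y"
      using later_adj[of j x y] x y adj Suc agree \<open>x \<noteq> v\<close> \<open>y \<noteq> v\<close> by simp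
    then show ?thesis
      using agree \<open>x \<noteq> v\<close> \<open>y \<noteq> v\<close> by simp
  qed
qed

lemma set_list_update_union_covers:
  "\<forall>D \<in> set Cs. \<exists>D' \<in> set (Cs[a := Cs ! a \<union> X]). D \<subseteq> D'"
proof
  fix D
  assume "D \<in> set Cs"
  then obtain j where "j < length Cs" "D = Cs ! j"
    by (auto simp: in_set_conv_nth)
  then show "\<exists>D' \<in> set (Cs[a := Cs ! a \<union> X]). D \<subseteq> D'"
    by (intro bexI[of _ "Cs[a := Cs ! a \<union> X] ! j"]) (cases "a = j", auto)
qed

lemma perfect_elim_order_add_clique:
  assumes peo: "perfect_elim_order (clique_adj Cs) (\<Union>(set Cs)) vs"
    and fresh: "v \<notin> \<Union>(set Cs)"
    and "C \<in> set Cs" "S \<subseteq> C"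
    and new: "S \<union> {v} \<in> set Cs'"
    and only_new: "set Cs' \<subseteq> insert (S \<union> {v}) (set Cs)"
    and covers: "\<forall>D \<in> set Cs. \<exists>D' \<in> set Cs'. D \<subseteq> D'"
  shows "perfect_elim_order (clique_adj Cs') (\<Union>(set Cs')) (v # vs)"
proof -
  have vertices: "\<Union>(set Cs') = insert v (\<Union>(set Cs))"
  proof
    show "\<Union>(set Cs') \<subseteq> insert v (\<Union>(set Cs))"
      using only_new \<open>C \<in> set Cs\<close> \<open>S \<subseteq> C\<close> by blast
    show "insert v (\<Union>(set Cs)) \<subseteq> \<Union>(set Cs')"
      using new covers by blast
  qed
  have agree: "clique_adj Cs' x y \<longleftrightarrow> clique_adj Cs x y" if "x \<noteq> v" "y \<noteq> v" for x y
  proof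
    assume "clique_adj Cs' x y"
    then obtain D where "D \<in> set Cs'" "x \<in> D" "y \<in> D" "x \<noteq> y"
      unfolding clique_adj_def by blast
    then have "D \<in> set Cs \<or> x \<in> C \<and> y \<in> C"
      using only_new that \<open>S \<subseteq> C\<close> by auto
    then show "clique_adj Cs x y"
      using \<open>x \<in> D\<close> \<open>y \<in> D\<close> \<open>x \<noteq> y\<close> \<open>C \<in> set Cs\<close> unfolding clique_adj_def by blast
  next
    assume "clique_adj Cs x y"
    then obtain D where "D \<in> set Cs" "x \<in> D" "y \<in> D" "x \<noteq> y"
      unfolding clique_adj_def by blast
    moreover obtain D' where "D' \<in> set Cs'" "D \<subseteq> D'"
      using covers \<open>D \<in> set Cs\<close> by blast
    ultimately show "clique_adj Cs' x y"
      unfolding clique_adj_def by blast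
  qed
  have "x \<in> S" if "clique_adj Cs' v x" for x
    using that only_new fresh unfolding clique_adj_def by blast
  then have simplicial: "clique_adj Cs x y"
    if "clique_adj Cs' v x" "clique_adj Cs' v y" "x \<noteq> y" for x y
    using that \<open>C \<in> set Cs\<close> \<open>S \<subseteq> C\<close> unfolding clique_adj_def by blast
  show ?thesis
    unfolding vertices by (rule perfect_elim_order_Cons[OF peo fresh agree simplicial])
qed

lemma clique_step_perfect_elim_order:
  assumes "clique_step V (Cs, us) (Cs', us')"
    and "perfect_elim_order (clique_adj Cs) (\<Union>(set Cs)) (rev us)"
  shows "perfect_elim_order (clique_adj Cs') (\<Union>(set Cs')) (rev us')"
  using assms(1)
proof cases
  case (proper v a S)
  then show ?thesis
    using perfect_elim_order_add_clique[OF assms(2), of v "Cs ! a" S Cs']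
    by (auto simp: nth_mem)
next
  case (whole v a)
  have "perfect_elim_order (clique_adj Cs') (\<Union>(set Cs')) (v # rev us)"
  proof (rule perfect_elim_order_add_clique[OF assms(2)])
    show "v \<notin> \<Union>(set Cs)" "Cs ! a \<in> set Cs" "Cs ! a \<subseteq> Cs ! a"
      using whole by auto
    show "Cs ! a \<union> {v} \<in> set Cs'"
      unfolding whole(1) using whole(4) by (rule set_update_memI)
    show "set Cs' \<subseteq> insert (Cs ! a \<union> {v}) (set Cs)"
      unfolding whole(1) by (rule set_update_subset_insert)
    show "\<forall>D \<in> set Cs. \<exists>D' \<in> set Cs'. D \<subseteq> D'"
      unfolding whole(1) by (rule set_list_update_union_covers)
  qed
  then show ?thesis
    using whole(2) by simp
next
  case (empty v a)
  then show ?thesis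
    using perfect_elim_order_add_clique[OF assms(2), of v "Cs ! a" "{}" Cs']
    by (auto simp: nth_mem)
qed

lemma clique_steps_perfect_elim_order:
  assumes "(clique_step V)\<^sup>*\<^sup>* (Cs0, us0) (Cs, us)"
    and "perfect_elim_order (clique_adj Cs0) (\<Union>(set Cs0)) (rev us0)"
  shows "perfect_elim_order (clique_adj Cs) (\<Union>(set Cs)) (rev us)"
  using assms(1)
proof (induction "(Cs, us)" arbitrary: Cs us rule: rtranclp_induct)
  case base
  then show ?case
    using assms(2) by simp
next
  case (step s)
  then show ?case
    using clique_step_perfect_elim_order by (metis prod.collapse)
qed

theorem theorem15:
  fixes p :: nat and Cs0 Cs :: "nat set list" and us0 us :: "nat list"
  assumes init_sub: "\<forall>C \<in> set Cs0. C \<noteq> {} \<and> C \<subseteq> {1..p}"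
    and init_order: "distinct us0" "set us0 = \<Union>(set Cs0)"
    and init_peo: "perfect_elim_order (clique_adj Cs0) (\<Union>(set Cs0)) (rev us0)"
    and run: "(clique_step {1..p})\<^sup>*\<^sup>* (Cs0, us0) (Cs, us)"
    and finished: "\<Union>(set Cs) = {1..p}"
  shows "perfect_elim_order (clique_adj Cs) {1..p} (rev us)"
  using clique_steps_perfect_elim_order[OF run init_peo] finished by simp

end
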